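(* Let $\mathsf{C}\subset V$ be a proper cone, $\phi$ in the interior of $\mathsf{C}^*$, $K_\phi=\mathsf{C}\cap\phi^{-1}(1)$ a polytope, and $k\ge1$. If $\mathrm{card}(\mathrm{Av}(x))>k$ for every vertex $x$ of $K_\phi$, then $\gamma_k^\phi$ is not entanglement-breaking.
   Context: Proper cone: closed convex cone in a finite-dimensional real vector space, containing no line, not contained in a hyperplane; $\mathsf{C}^*$ is its dual cone; $\mathsf{C}_1\otimes_{\min}\mathsf{C}_2=\mathrm{conv}\{x\otimes y:x\in\mathsf{C}_1,y\in\mathsf{C}_2\}$. $\gamma_k^\phi=\frac1k\sum_{j=1}^k\phi^{\otimes(j-1)}\otimes\mathrm{Id}_V\otimes\phi^{\otimes(k-j)}:V^{\otimes k}\to V$, viewed as a tensor in $(V^* )^{\otimes k}\otimes V$, is entanglement-breaking if it belongs to $(\mathsf{C}^* )^{\otimes_{\min}k}\otimes_{\min}\mathsf{C}$. The avoiding set of a vertex $x$ of $K_\phi$ is the set of facets of $K_\phi$ not containing $x$. *)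

theory Defs
  imports "HOL-Analysis.Analysis" "HOL-Library.Function_Algebras"
begin

text \<open>Real-valued functions form a real vector space pointwise; needed so that the
  library's convex hull can be used for sets of tensors.\<close>

instantiation "fun" :: (type, real_vector) real_vector
begin
definition scaleR_fun :: "real \<Rightarrow> ('a \<Rightarrow> 'b) \<Rightarrow> 'a \<Rightarrow> 'b"
  where "scaleR_fun r f = (\<lambda>x. r *\<^sub>R f x)"
instance
  by standard (auto simp: scaleR_fun_def fun_eq_iff scaleR_add_right scaleR_add_left)
end

text \<open>Finite-dimensional real vector space V = type 'v (euclidean_space).
  The dual space V* is identified with V via the inner product.\<close>

definition proper_cone :: "'v::euclidean_space set \<Rightarrow> bool" where
  "proper_cone C \<longleftrightarrow> closed C \<and> convex C \<and> cone C
     \<and> \<not> (\<exists>u. u \<noteq> 0 \<and> range (\<lambda>t::real. t *\<^sub>R u) \<subseteq> C)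
     \<and> \<not> (\<exists>a b. a \<noteq> 0 \<and> C \<subseteq> {x. a \<bullet> x = b})"

definition dual_cone :: "'v::euclidean_space set \<Rightarrow> 'v set" where
  "dual_cone C = {f. \<forall>x\<in>C. 0 \<le> f \<bullet> x}"

text \<open>Tensors of order m over V are represented as multilinear forms on V^m,
  i.e. functions on lists of vectors (vanishing on lists of length \<noteq> m).\<close>

type_synonym 'v tensor = "'v list \<Rightarrow> real"

definition vec_tensor :: "'v::euclidean_space \<Rightarrow> 'v tensor" where
  "vec_tensor x = (\<lambda>vs. if length vs = 1 then x \<bullet> hd vs else 0)"

definition tensor_prod :: "nat \<Rightarrow> nat \<Rightarrow> 'v tensor \<Rightarrow> 'v tensor \<Rightarrow> 'v tensor" where
  "tensor_prod a b T S = (\<lambda>vs. if length vs = a + b then T (take a vs) * S (drop a vs) else 0)"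

definition min_tensor :: "nat \<Rightarrow> nat \<Rightarrow> 'v tensor set \<Rightarrow> 'v tensor set \<Rightarrow> 'v tensor set" where
  "min_tensor a b A B = convex hull {tensor_prod a b T S | T S. T \<in> A \<and> S \<in> B}"

fun min_tensor_power :: "'v::euclidean_space set \<Rightarrow> nat \<Rightarrow> 'v tensor set" where
  "min_tensor_power C 0 = {}"
| "min_tensor_power C (Suc 0) = vec_tensor ` C"
| "min_tensor_power C (Suc (Suc n)) =
     min_tensor (Suc n) 1 (min_tensor_power C (Suc n)) (vec_tensor ` C)"

text \<open>gamma_k^phi as a tensor in (V*)^{\<otimes>k} \<otimes> V, evaluated as a multilinear form
  on (v_1,...,v_k, w): (1/k) \<Sum>_j (\<Prod>_{i\<noteq>j} phi(v_i)) \<langle>v_j, w\<rangle>.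
  Here Id_V \<in> V* \<otimes> V corresponds to the form (v,w) \<mapsto> v \<bullet> w.\<close>
definition gamma :: "nat \<Rightarrow> 'v::euclidean_space \<Rightarrow> 'v tensor" where
  "gamma k \<phi> = (\<lambda>vs. if length vs = k + 1 then
      (1 / real k) * (\<Sum>j<k. (\<Prod>i\<in>{..<k} - {j}. \<phi> \<bullet> vs ! i) * ((vs ! j) \<bullet> (vs ! k)))
    else 0)"

definition entanglement_breaking :: "'v::euclidean_space set \<Rightarrow> nat \<Rightarrow> 'v tensor \<Rightarrow> bool" where
  "entanglement_breaking C k T \<longleftrightarrow>
     T \<in> min_tensor k 1 (min_tensor_power (dual_cone C) k) (vec_tensor ` C)"

definition base_section :: "'v::euclidean_space set \<Rightarrow> 'v \<Rightarrow> 'v set" where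
  "base_section C \<phi> = C \<inter> {x. \<phi> \<bullet> x = 1}"

definition avoiding_set :: "'v::euclidean_space set \<Rightarrow> 'v \<Rightarrow> 'v set set" where
  "avoiding_set K x = {F. F facet_of K \<and> x \<notin> F}"

end

theory Submission imports Defs begin

text \<open>Suppose \<open>\<gamma>\<^sub>k\<^sup>\<phi> = \<Sum>\<^sub>i c\<^sub>i f\<^sub>i\<^sub>1 \<otimes> \<dots> \<otimes> f\<^sub>i\<^sub>k \<otimes> x\<^sub>i\<close> with \<open>f\<^sub>i\<^sub>j \<in> C\<^sup>*\<close> and \<open>x\<^sub>i \<in> C\<close>.
  Let \<open>y\<close> be a vertex of \<open>K\<^sub>\<phi>\<close>, exposed by \<open>h \<in> C\<^sup>*\<close>. Since \<open>\<gamma>(y,\<dots>,y,w) = \<langle>y,w\<rangle>\<close>, testing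
  with \<open>w = y\<close> and \<open>w = h\<close> and using positivity of all terms yields an index \<open>i\<close> with
  \<open>f\<^sub>i\<^sub>j(y) > 0\<close> for all \<open>j\<close> and \<open>x\<^sub>i\<close> a positive multiple of \<open>y\<close>. For a facet \<open>F\<close> avoiding \<open>y\<close>,
  exposed by \<open>g \<in> C\<^sup>*\<close>, \<open>\<gamma>\<close> vanishes on \<open>F\<^sup>k \<times> {g}\<close>, while the \<open>i\<close>-th term would not unless some
  \<open>f\<^sub>i\<^sub>j\<close> vanishes on \<open>F\<close>. As \<open>f\<^sub>i\<^sub>j\<close> is nonnegative on \<open>K\<^sub>\<phi>\<close> but not zero at \<open>y\<close>, its zero set
  meets \<open>K\<^sub>\<phi>\<close> in a proper face, which contains at most one facet. Hence there are at most
  \<open>k\<close> facets avoiding \<open>y\<close>.\<close>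

lemma sum_lessThan_add:
  "(\<Sum>i<m + n. g i) = (\<Sum>i<m. g i) + (\<Sum>i<n. g (m + i :: nat))"
  by (induction n) (auto simp: add.assoc)

definition product_sum :: "nat \<Rightarrow> nat \<Rightarrow> (nat \<Rightarrow> real) \<Rightarrow> (nat \<Rightarrow> nat \<Rightarrow> 'v::euclidean_space) \<Rightarrow> 'v tensor"
  where "product_sum m n c f =
    (\<lambda>vs. if length vs = m then \<Sum>i<n. c i * (\<Prod>j<m. f i j \<bullet> vs ! j) else 0)"

definition separable_tensors :: "nat \<Rightarrow> (nat \<Rightarrow> 'v::euclidean_space set) \<Rightarrow> 'v tensor set"
  where "separable_tensors m S =
    {product_sum m n c f | n c f. \<forall>i<n. 0 \<le> c i \<and> (\<forall>j<m. f i j \<in> S j)}"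

lemma convex_separable_tensors: "convex (separable_tensors m S)"
  unfolding convex_def
proof (intro ballI allI impI)
  fix x y and u v :: real
  assume "x \<in> separable_tensors m S" "y \<in> separable_tensors m S" and uv: "0 \<le> u" "0 \<le> v"
  then obtain n1 c1 f1 n2 c2 f2
    where 1: "\<forall>i<n1. 0 \<le> c1 i \<and> (\<forall>j<m. f1 i j \<in> S j)" "x = product_sum m n1 c1 f1"
      and 2: "\<forall>i<n2. 0 \<le> c2 i \<and> (\<forall>j<m. f2 i j \<in> S j)" "y = product_sum m n2 c2 f2"
    unfolding separable_tensors_def by blast
  define c where "c i = (if i < n1 then u * c1 i else v * c2 (i - n1))" for i
  define f where "f i = (if i < n1 then f1 i else f2 (i - n1))" for i
  have "\<forall>i<n1 + n2. 0 \<le> c i \<and> (\<forall>j<m. f i j \<in> S j)"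
    using 1(1) 2(1) uv by (auto simp: c_def f_def)
  moreover have "u *\<^sub>R x + v *\<^sub>R y = product_sum m (n1 + n2) c f"
    by (auto simp: fun_eq_iff 1(2) 2(2) product_sum_def scaleR_fun_def sum_lessThan_add
        sum_distrib_left c_def f_def intro!: arg_cong2[where f = "(+)"] sum.cong)
  ultimately show "u *\<^sub>R x + v *\<^sub>R y \<in> separable_tensors m S"
    unfolding separable_tensors_def by blast
qed

lemma tensor_prod_product_sum_vec_tensor:
  "tensor_prod m 1 (product_sum m n c f) (vec_tensor x) =
     product_sum (Suc m) n c (\<lambda>i j. if j < m then f i j else x)"
proof -
  have "(\<Prod>j<m. f i j \<bullet> take m vs ! j) = (\<Prod>j<m. (if j < m then f i j else x) \<bullet> vs ! j)" for i vs
    by (rule prod.cong) auto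
  then show ?thesis
    by (auto simp: fun_eq_iff tensor_prod_def product_sum_def vec_tensor_def hd_drop_conv_nth
        sum_distrib_right mult.assoc)
qed

lemma tensor_prod_vec_tensor_separable:
  assumes "T \<in> separable_tensors m S" "x \<in> S m"
  shows "tensor_prod m 1 T (vec_tensor x) \<in> separable_tensors (Suc m) S"
proof -
  obtain n c f where nonneg: "\<forall>i<n. 0 \<le> c i \<and> (\<forall>j<m. f i j \<in> S j)"
    and T: "T = product_sum m n c f"
    using assms(1) unfolding separable_tensors_def by blast
  show ?thesis
    unfolding T tensor_prod_product_sum_vec_tensor separable_tensors_def
    using nonneg assms(2) by (intro CollectI exI conjI refl) (auto simp: less_Suc_eq)
qed

lemma separable_tensors_mono:
  "(\<And>j. j < m \<Longrightarrow> S j \<subseteq> S' j) \<Longrightarrow> separable_tensors m S \<subseteq> separable_tensors m S'"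
  unfolding separable_tensors_def by (auto 0 3) (metis subsetD)

lemma min_tensor_power_separable:
  "m \<ge> 1 \<Longrightarrow> min_tensor_power D m \<subseteq> separable_tensors m (\<lambda>_. D)"
proof (induction D m rule: min_tensor_power.induct)
  case (2 D)
  have "vec_tensor x = product_sum 1 1 (\<lambda>_. 1) (\<lambda>_ _. x)" for x :: 'a
    by (auto simp: fun_eq_iff vec_tensor_def product_sum_def length_Suc_conv)
  then show ?case
    unfolding separable_tensors_def by fastforce
next
  case (3 D n)
  then show ?case
    unfolding min_tensor_power.simps min_tensor_def
    using tensor_prod_vec_tensor_separable[of _ "Suc n" "\<lambda>_. D"]
    by (intro hull_minimal convex_separable_tensors) auto
qed auto

lemma entanglement_breaking_separable:
  assumes "entanglement_breaking C k T" "k \<ge> 1"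
  shows "T \<in> separable_tensors (Suc k) (\<lambda>j. if j < k then dual_cone C else C)"
proof -
  let ?S = "\<lambda>j. if j < k then dual_cone C else C"
  have "min_tensor_power (dual_cone C) k \<subseteq> separable_tensors k ?S"
    using min_tensor_power_separable[OF assms(2)] separable_tensors_mono[of k "\<lambda>_. dual_cone C" ?S]
    by auto
  then have "min_tensor k 1 (min_tensor_power (dual_cone C) k) (vec_tensor ` C)
      \<subseteq> separable_tensors (Suc k) ?S"
    unfolding min_tensor_def
    using tensor_prod_vec_tensor_separable[of _ k ?S]
    by (intro hull_minimal convex_separable_tensors) auto
  then show ?thesis
    using assms(1) unfolding entanglement_breaking_def by auto
qed

lemma entanglement_breaking_product_sum:
  assumes "entanglement_breaking C k T" "k \<ge> 1"
  obtains n c f where "T = product_sum (Suc k) n c f" "\<forall>i<n. 0 \<le> c i"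
    "\<forall>i<n. \<forall>j<k. f i j \<in> dual_cone C" "\<forall>i<n. f i k \<in> C"
proof -
  obtain n c f where "T = product_sum (Suc k) n c f"
    and "\<forall>i<n. 0 \<le> c i \<and> (\<forall>j<Suc k. f i j \<in> (if j < k then dual_cone C else C))"
    using entanglement_breaking_separable[OF assms] unfolding separable_tensors_def by blast
  then show thesis
    using that by (simp add: less_Suc_eq all_conj_distrib)
qed

lemma gamma_replicate:
  assumes "\<phi> \<bullet> y = 1" "k \<ge> 1"
  shows "gamma k \<phi> (replicate k y @ [w]) = y \<bullet> w"
proof -
  have "(\<Prod>i\<in>{..<k} - {j}. \<phi> \<bullet> (replicate k y @ [w]) ! i) = 1" for j
    by (rule prod.neutral) (auto simp: nth_append assms)
  then show ?thesis
    using assms by (simp add: gamma_def nth_append del: replicate.simps)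
qed

lemma gamma_orthogonal:
  assumes "\<forall>j<k. U j \<bullet> g = 0"
  shows "gamma k \<phi> (map U [0..<k] @ [g]) = 0"
  using assms by (auto simp: gamma_def nth_append intro!: sum.neutral)

lemma inner_pos_of_interior_dual_cone:
  assumes "\<phi> \<in> interior (dual_cone C)" "x \<in> C" "x \<noteq> 0"
  shows "0 < \<phi> \<bullet> x"
proof -
  obtain e where e: "e > 0" "ball \<phi> e \<subseteq> dual_cone C"
    using assms(1) mem_interior by metis
  define z where "z = \<phi> - (e / (2 * norm x)) *\<^sub>R x"
  have "dist \<phi> z < e"
    using e(1) assms(3) by (simp add: z_def dist_norm)
  then have "0 \<le> z \<bullet> x"
    using e(2) assms(2) by (auto simp: dual_cone_def)
  also have "z \<bullet> x = \<phi> \<bullet> x - e / 2 * norm x"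
    using assms(3)
    by (simp add: z_def inner_diff_left power2_eq_square flip: power2_norm_eq_inner)
  finally have "e / 2 * norm x \<le> \<phi> \<bullet> x"
    by simp
  moreover have "0 < e / 2 * norm x"
    using e(1) assms(3) by simp
  ultimately show ?thesis
    by linarith
qed

lemma scaleR_mem_base_section:
  assumes "cone C" "x \<in> C" "0 < \<phi> \<bullet> x"
  shows "(1 / (\<phi> \<bullet> x)) *\<^sub>R x \<in> base_section C \<phi>"
  using assms by (simp add: base_section_def cone_def)

lemma face_of_base_section_exposed_by_dual_cone:
  assumes "cone C" "\<phi> \<in> interior (dual_cone C)" "polyhedron (base_section C \<phi>)"
    and "F face_of base_section C \<phi>"
  obtains g where "g \<in> dual_cone C" "\<forall>v\<in>F. g \<bullet> v = 0"
    "\<forall>v\<in>base_section C \<phi> - F. 0 < g \<bullet> v"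
proof -
  let ?K = "base_section C \<phi>"
  have "F exposed_face_of ?K"
    by (simp add: exposed_face_of_polyhedron[OF assms(3)] assms(4))
  then obtain a b where ab: "?K \<subseteq> {x. a \<bullet> x \<le> b}" "F = ?K \<inter> {x. a \<bullet> x = b}"
    unfolding exposed_face_of_def by blast
  define g where "g = b *\<^sub>R \<phi> - a"
  have gK: "g \<bullet> v = b - a \<bullet> v" if "v \<in> ?K" for v
    using that by (simp add: g_def inner_diff_left base_section_def)
  have "0 \<le> g \<bullet> x" if x: "x \<in> C" for x
  proof (cases "x = 0")
    case False
    have t: "0 < \<phi> \<bullet> x"
      using inner_pos_of_interior_dual_cone[OF assms(2) x False] .
    have u: "(1 / (\<phi> \<bullet> x)) *\<^sub>R x \<in> ?K"
      using scaleR_mem_base_section[OF assms(1) x t] .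
    then have "0 \<le> g \<bullet> ((1 / (\<phi> \<bullet> x)) *\<^sub>R x)"
      using gK[OF u] ab(1) by auto
    then show ?thesis
      using t by (simp add: zero_le_divide_iff)
  qed simp
  then have "g \<in> dual_cone C"
    by (simp add: dual_cone_def)
  moreover have "\<forall>v\<in>F. g \<bullet> v = 0"
    using ab(2) gK by auto
  moreover have "\<forall>v\<in>?K - F. 0 < g \<bullet> v"
    using ab gK by force
  ultimately show thesis
    using that by blast
qed

lemma base_section_exposed_vertex:
  assumes "proper_cone C" "\<phi> \<in> interior (dual_cone C)" "polytope (base_section C \<phi>)"
  obtains y h where "y extreme_point_of base_section C \<phi>" "h \<in> dual_cone C" "h \<bullet> y = 0"
    "\<forall>v\<in>base_section C \<phi> - {y}. 0 < h \<bullet> v"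
proof -
  let ?K = "base_section C \<phi>"
  have cone: "cone C" and convex: "convex C"
    using assms(1) by (auto simp: proper_cone_def)
  obtain e :: 'a where "e \<in> Basis"
    using nonempty_Basis by blast
  then have "\<not> C \<subseteq> {x. e \<bullet> x = 0}"
    using assms(1) nonzero_Basis unfolding proper_cone_def by blast
  then obtain x where x: "x \<in> C" "e \<bullet> x \<noteq> 0"
    by auto
  then have "?K \<noteq> {}"
    using scaleR_mem_base_section[OF cone] inner_pos_of_interior_dual_cone[OF assms(2)]
    by (metis empty_iff inner_zero_right)
  moreover have "convex ?K"
    unfolding base_section_def by (intro convex_Int convex convex_hyperplane)
  ultimately obtain y where y: "y extreme_point_of ?K"
    using extreme_point_exists_convex polytope_imp_compact[OF assms(3)] by blast
  then have "{y} face_of ?K"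
    by (simp add: face_of_singleton)
  then obtain h where "h \<in> dual_cone C" "\<forall>v\<in>{y}. h \<bullet> v = 0" "\<forall>v\<in>?K - {y}. 0 < h \<bullet> v"
    using face_of_base_section_exposed_by_dual_cone[OF cone assms(2)
        polytope_imp_polyhedron[OF assms(3)]] by blast
  then show thesis
    using that y by simp
qed

lemma ray_through_exposed_vertex:
  assumes "cone C" "\<phi> \<in> interior (dual_cone C)" "x \<in> C" "x \<noteq> 0" "h \<bullet> x = 0"
    and "\<forall>v\<in>base_section C \<phi> - {y}. 0 < h \<bullet> v"
  shows "x = (\<phi> \<bullet> x) *\<^sub>R y"
proof -
  have t: "0 < \<phi> \<bullet> x"
    using inner_pos_of_interior_dual_cone[OF assms(2-4)] .
  have "h \<bullet> ((1 / (\<phi> \<bullet> x)) *\<^sub>R x) = 0"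
    using assms(5) by simp
  then have "(1 / (\<phi> \<bullet> x)) *\<^sub>R x = y"
    using assms(6) scaleR_mem_base_section[OF assms(1,3) t]
    by (metis Diff_iff less_irrefl singletonD)
  then show ?thesis
    using t by auto
qed

lemma facet_of_subset_face_eq:
  fixes K :: "'a::euclidean_space set"
  assumes "convex K" "F facet_of K" "G face_of K" "G \<noteq> K" "F \<subseteq> G"
  shows "F = G"
proof (rule ccontr)
  assume "F \<noteq> G"
  moreover have "F face_of G"
    using face_of_subset[OF facet_of_imp_face_of[OF assms(2)] assms(5) face_of_imp_subset[OF assms(3)]] .
  ultimately have "aff_dim F < aff_dim G"
    using face_of_aff_dim_lt[OF face_of_imp_convex[OF assms(3)]] by blast
  moreover have "aff_dim G < aff_dim K"
    using face_of_aff_dim_lt[OF assms(1,3,4)] .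
  ultimately show False
    using assms(2) by (simp add: facet_of_def)
qed

lemma facets_in_zero_set_eq:
  fixes K :: "'a::euclidean_space set"
  assumes "convex K" "\<forall>x\<in>K. 0 \<le> a \<bullet> x" "y \<in> K" "a \<bullet> y \<noteq> 0"
    and "F facet_of K" "F' facet_of K" "\<forall>v\<in>F. a \<bullet> v = 0" "\<forall>v\<in>F'. a \<bullet> v = 0"
  shows "F = F'"
proof -
  let ?G = "K \<inter> {x. (- a) \<bullet> x = 0}"
  have face: "?G face_of K"
    by (rule face_of_Int_supporting_hyperplane_le) (use assms(1,2) in auto)
  have proper: "?G \<noteq> K"
    using assms(3,4) by auto
  have "F \<subseteq> ?G" "F' \<subseteq> ?G"
    using facet_of_imp_subset assms(5-8) by auto
  then have "F = ?G" "F' = ?G"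
    using facet_of_subset_face_eq[OF assms(1) _ face proper] assms(5,6) by blast+
  then show ?thesis
    by simp
qed

lemma separable_gamma_term_at_vertex:
  assumes "k \<ge> 1" and rep: "gamma k \<phi> = product_sum (Suc k) n c f"
    and c: "\<forall>i<n. 0 \<le> c i" and fD: "\<forall>i<n. \<forall>j<k. f i j \<in> dual_cone C"
    and fC: "\<forall>i<n. f i k \<in> C"
    and y: "y \<in> C" "\<phi> \<bullet> y = 1" and h: "h \<in> dual_cone C" "h \<bullet> y = 0"
  obtains i where "i < n" "0 < c i" "\<forall>j<k. 0 < f i j \<bullet> y" "f i k \<noteq> 0" "h \<bullet> f i k = 0"
proof -
  define P where "P i = c i * (\<Prod>j<k. f i j \<bullet> y)" for i
  have P_nonneg: "0 \<le> P i" if "i < n" for i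
    using c fD y(1) that by (auto simp: P_def dual_cone_def intro!: mult_nonneg_nonneg prod_nonneg)
  have eval: "(\<Sum>i<n. P i * (f i k \<bullet> w)) = y \<bullet> w" for w
  proof -
    have "(\<Prod>j<Suc k. f i j \<bullet> (replicate k y @ [w]) ! j) = (\<Prod>j<k. f i j \<bullet> y) * (f i k \<bullet> w)" for i
      by (auto simp: nth_append intro!: prod.cong)
    then show ?thesis
      using gamma_replicate[OF y(2) assms(1), of w]
      by (simp add: rep product_sum_def P_def mult.assoc)
  qed
  have "(\<Sum>i<n. P i * (f i k \<bullet> y)) \<noteq> 0"
    using eval[of y] y(2) by auto
  then obtain i where i: "i < n" "P i * (f i k \<bullet> y) \<noteq> 0"
    using sum.not_neutral_contains_not_neutral by blast
  have "\<forall>i'\<in>{..<n}. 0 \<le> P i' * (f i' k \<bullet> h)"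
  proof
    fix i' assume "i' \<in> {..<n}"
    then have "0 \<le> P i'" "0 \<le> h \<bullet> f i' k"
      using P_nonneg fC h(1) by (auto simp: dual_cone_def)
    then show "0 \<le> P i' * (f i' k \<bullet> h)"
      by (simp add: inner_commute)
  qed
  moreover have "(\<Sum>i'<n. P i' * (f i' k \<bullet> h)) = 0"
    using eval[of h] h(2) by (simp add: inner_commute)
  ultimately have "P i * (f i k \<bullet> h) = 0"
    using sum_nonneg_eq_0_iff[of "{..<n}" "\<lambda>i'. P i' * (f i' k \<bullet> h)"] i(1) by simp
  then have "h \<bullet> f i k = 0"
    using i(2) by (simp add: inner_commute)
  moreover have "0 < c i" "\<forall>j<k. 0 < f i j \<bullet> y"
    using i c fD y(1) by (auto simp: P_def dual_cone_def order_less_le)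
  moreover have "f i k \<noteq> 0"
    using i(2) by auto
  ultimately show thesis
    using that i(1) by blast
qed

lemma separable_gamma_factor_vanishes:
  assumes rep: "gamma k \<phi> = product_sum (Suc k) n c f"
    and c: "\<forall>i<n. 0 \<le> c i" and fD: "\<forall>i<n. \<forall>j<k. f i j \<in> dual_cone C"
    and fC: "\<forall>i<n. f i k \<in> C"
    and i: "i < n" "0 < c i"
    and g: "g \<in> dual_cone C" "0 < g \<bullet> f i k"
    and F: "F \<subseteq> C" "\<forall>v\<in>F. g \<bullet> v = 0"
  shows "\<exists>j<k. \<forall>v\<in>F. f i j \<bullet> v = 0"
proof (rule ccontr)
  assume "\<not> ?thesis"
  then obtain U where U: "\<And>j. j < k \<Longrightarrow> U j \<in> F \<and> f i j \<bullet> U j \<noteq> 0"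
    by metis
  define t where "t i' = c i' * (\<Prod>j<k. f i' j \<bullet> U j) * (f i' k \<bullet> g)" for i'
  have "(\<Sum>i'<n. t i') = gamma k \<phi> (map U [0..<k] @ [g])"
    by (auto simp: rep product_sum_def t_def nth_append mult.assoc intro!: sum.cong prod.cong)
  also have "\<dots> = 0"
    by (intro gamma_orthogonal) (metis U F(2) inner_commute)
  finally have "(\<Sum>i'<n. t i') = 0" .
  moreover have "\<forall>i'\<in>{..<n}. 0 \<le> t i'"
    using c fD fC g(1) U F(1)
    by (auto simp: t_def dual_cone_def inner_commute subset_iff intro!: mult_nonneg_nonneg prod_nonneg)
  ultimately have "t i = 0"
    using sum_nonneg_eq_0_iff[of "{..<n}" t] i(1) by simp
  moreover have "(\<Prod>j<k. f i j \<bullet> U j) \<noteq> 0"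
    using U by simp
  ultimately show False
    using i(2) g(2) by (simp add: t_def inner_commute)
qed

lemma card_facets_in_zero_sets_le:
  fixes K :: "'a::euclidean_space set" and a :: "nat \<Rightarrow> 'a"
  assumes "convex K" "y \<in> K"
    and nonneg: "\<And>j x. j < k \<Longrightarrow> x \<in> K \<Longrightarrow> 0 \<le> a j \<bullet> x"
    and nonzero: "\<And>j. j < k \<Longrightarrow> a j \<bullet> y \<noteq> 0"
    and facets: "\<And>F. F \<in> \<F> \<Longrightarrow> F facet_of K \<and> (\<exists>j<k. \<forall>v\<in>F. a j \<bullet> v = 0)"
  shows "card \<F> \<le> k"
proof -
  obtain J where J: "\<And>F. F \<in> \<F> \<Longrightarrow> J F < k \<and> (\<forall>v\<in>F. a (J F) \<bullet> v = 0)"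
    using facets by metis
  have "inj_on J \<F>"
  proof (rule inj_onI)
    fix F F' assume F: "F \<in> \<F>" and F': "F' \<in> \<F>" and same: "J F = J F'"
    have j: "J F < k"
      using J[OF F] by blast
    show "F = F'"
    proof (rule facets_in_zero_set_eq[OF assms(1) _ assms(2)])
      show "\<forall>x\<in>K. 0 \<le> a (J F) \<bullet> x" "a (J F) \<bullet> y \<noteq> 0"
        using nonneg nonzero j by auto
      show "F facet_of K" "F' facet_of K"
        using facets F F' by auto
      show "\<forall>v\<in>F. a (J F) \<bullet> v = 0" "\<forall>v\<in>F'. a (J F) \<bullet> v = 0"
        using J[OF F] J[OF F'] same by simp_all
    qed
  qed
  then have "card \<F> \<le> card {..<k}"
    by (rule card_inj_on_le) (use J in auto)
  then show ?thesis
    by simp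
qed

lemma separable_gamma_factor_vanishes_on_avoiding_facet:
  assumes "cone C" "\<phi> \<in> interior (dual_cone C)" "polyhedron (base_section C \<phi>)"
    and rep: "gamma k \<phi> = product_sum (Suc k) n c f"
    and c: "\<forall>i<n. 0 \<le> c i" and fD: "\<forall>i<n. \<forall>j<k. f i j \<in> dual_cone C"
    and fC: "\<forall>i<n. f i k \<in> C"
    and i: "i < n" "0 < c i" "f i k = t *\<^sub>R y" "0 < t"
    and y: "y \<in> base_section C \<phi>" and F: "F \<in> avoiding_set (base_section C \<phi>) y"
  shows "\<exists>j<k. \<forall>v\<in>F. f i j \<bullet> v = 0"
proof -
  have facet: "F facet_of base_section C \<phi>" "y \<notin> F"
    using F by (auto simp: avoiding_set_def)
  then obtain g where g: "g \<in> dual_cone C" "\<forall>v\<in>F. g \<bullet> v = 0"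
    "\<forall>v\<in>base_section C \<phi> - F. 0 < g \<bullet> v"
    using face_of_base_section_exposed_by_dual_cone[OF assms(1-3)] facet_of_imp_face_of by blast
  have "0 < g \<bullet> f i k"
    using g(3) y facet(2) i(3,4) by simp
  moreover have "F \<subseteq> C"
    using facet_of_imp_subset[OF facet(1)] by (auto simp: base_section_def)
  ultimately show ?thesis
    using separable_gamma_factor_vanishes[OF rep c fD fC i(1,2) g(1)] g(2) by blast
qed

theorem mainTheorem13:
  fixes C :: "'v::euclidean_space set" and \<phi> :: 'v and k :: nat
  assumes "proper_cone C"
    and "\<phi> \<in> interior (dual_cone C)"
    and "polytope (base_section C \<phi>)"
    and "k \<ge> 1"
    and "\<forall>x. x extreme_point_of (base_section C \<phi>) \<longrightarrow>
           card (avoiding_set (base_section C \<phi>) x) > k"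
  shows "\<not> entanglement_breaking C k (gamma k \<phi>)"
proof
  let ?K = "base_section C \<phi>"
  assume "entanglement_breaking C k (gamma k \<phi>)"
  then obtain n c f where rep: "gamma k \<phi> = product_sum (Suc k) n c f"
    and c: "\<forall>i<n. 0 \<le> c i" and fD: "\<forall>i<n. \<forall>j<k. f i j \<in> dual_cone C" and fC: "\<forall>i<n. f i k \<in> C"
    using entanglement_breaking_product_sum assms(4) by metis
  have cone: "cone C" and convex_K: "convex ?K" and polyhedron: "polyhedron ?K"
    using assms(1,3) polytope_imp_polyhedron
    by (auto simp: proper_cone_def base_section_def intro!: convex_Int convex_hyperplane)
  obtain y h where y: "y extreme_point_of ?K" and h: "h \<in> dual_cone C" "h \<bullet> y = 0"
    "\<forall>v\<in>?K - {y}. 0 < h \<bullet> v"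
    using base_section_exposed_vertex[OF assms(1-3)] by blast
  have yK: "y \<in> ?K"
    using y extreme_point_of_def by blast
  then obtain i where i: "i < n" "0 < c i" "\<forall>j<k. 0 < f i j \<bullet> y" "f i k \<noteq> 0"
    "h \<bullet> f i k = 0"
    using separable_gamma_term_at_vertex[OF assms(4) rep c fD fC _ _ h(1,2)]
    by (auto simp: base_section_def)
  have ray: "f i k = (\<phi> \<bullet> f i k) *\<^sub>R y" and pos: "0 < \<phi> \<bullet> f i k"
    using ray_through_exposed_vertex[OF cone assms(2) _ i(4) _ h(3)]
      inner_pos_of_interior_dual_cone[OF assms(2) _ i(4)] i(1,5) fC by (auto simp: inner_commute)
  have "card (avoiding_set ?K y) \<le> k"
  proof (rule card_facets_in_zero_sets_le[OF convex_K yK])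
    fix F assume "F \<in> avoiding_set ?K y"
    then show "F facet_of ?K \<and> (\<exists>j<k. \<forall>v\<in>F. f i j \<bullet> v = 0)"
      using separable_gamma_factor_vanishes_on_avoiding_facet[OF cone assms(2) polyhedron
          rep c fD fC i(1,2) ray pos yK]
      by (auto simp: avoiding_set_def)
  qed (use fD i(1,3) in \<open>auto simp: dual_cone_def base_section_def\<close>)
  then show False
    using assms(5) y by fastforce
qed

end
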